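(* Let $f\in\mathcal{A}_{d,n}$, $b\in\mathcal{A}_{d,m}$, $a\in\mathcal{A}_{e,n+m}$, and let $\sigma$ be a split of $[n+m]$ for which $b\cdot_\sigma f$ is defined (i.e. $\sigma$ consists of an $m$-element subset and its $n$-element complement). Then there exist finitely many $g_1,\dots,g_s\in\mathcal{A}_{e,n}$ and $h_1,\dots,h_s\in\mathcal{A}_{d+e,m}$ such that $a*(b\cdot_\sigma f)=\sum_{i=1}^s h_i\cdot_\sigma(g_i*f)$.
   Context: Let $\mathbf{k}$ be a commutative noetherian ring, $r$ a positive integer, and $\mathcal{A}=\bigoplus_{n,d\ge0}\mathcal{A}_{d,n}$ with $\mathcal{A}_{d,n}=(\mathrm{Sym}^d\mathbf{k}^r)^{\otimes n}$. A split $\sigma$ of $[p+q]$ is a subset $\{i_1<\cdots<i_p\}\subseteq[p+q]$ together with its complement $\{j_1<\cdots<j_q\}$; the shuffle product $\cdot_\sigma:\mathcal{A}_{d,p}\otimes\mathcal{A}_{d,q}\to\mathcal{A}_{d,p+q}$ is $(u_1\otimes\cdots\otimes u_p)\cdot_\sigma(v_1\otimes\cdots\otimes v_q)=w_1\otimes\cdots\otimes w_{p+q}$ with $w_{i_k}=u_k$, $w_{j_k}=v_k$, extended bilinearly. The product $*:\mathcal{A}_{d,n}\otimes\mathcal{A}_{e,n}\to\mathcal{A}_{d+e,n}$ is $(u_1\otimes\cdots\otimes u_n)*(v_1\otimes\cdots\otimes v_n)=u_1v_1\otimes\cdots\otimes u_nv_n$. *)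

theory Defs
  imports Main
begin

definition is_ideal :: "'k::comm_ring_1 set \<Rightarrow> bool" where
  "is_ideal I \<longleftrightarrow> 0 \<in> I \<and> (\<forall>x\<in>I. \<forall>y\<in>I. x + y \<in> I) \<and> (\<forall>x\<in>I. \<forall>c. c * x \<in> I)"

definition noetherian_cring :: "'k::comm_ring_1 itself \<Rightarrow> bool" where
  "noetherian_cring _ \<longleftrightarrow>
     (\<forall>C :: nat \<Rightarrow> 'k set. (\<forall>i. is_ideal (C i)) \<and> (\<forall>i. C i \<subseteq> C (Suc i))
        \<longrightarrow> (\<exists>N. \<forall>i\<ge>N. C i = C N))"

text \<open>Monomials of degree d in r variables: a basis of Sym^d k^r.\<close>

definition monomials_deg :: "nat \<Rightarrow> nat \<Rightarrow> (nat \<Rightarrow> nat) set" where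
  "monomials_deg r d = {\<alpha>. (\<forall>i\<ge>r. \<alpha> i = 0) \<and> (\<Sum>i<r. \<alpha> i) = d}"

text \<open>Basis of A_{d,n} = (Sym^d k^r)^{\<otimes>n}: n-tuples of degree-d monomials.\<close>

definition basisA :: "nat \<Rightarrow> nat \<Rightarrow> nat \<Rightarrow> (nat \<Rightarrow> nat) list set" where
  "basisA r d n = {ms. length ms = n \<and> set ms \<subseteq> monomials_deg r d}"

definition Aspace :: "nat \<Rightarrow> nat \<Rightarrow> nat \<Rightarrow> ((nat \<Rightarrow> nat) list \<Rightarrow> 'k::comm_ring_1) set" where
  "Aspace r d n = {x. \<forall>ms. ms \<notin> basisA r d n \<longrightarrow> x ms = 0}"

text \<open>Product *: A_{d,n} x A_{e,n} -> A_{d+e,n}, componentwise multiplication of monomials.\<close>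

definition starA :: "nat \<Rightarrow> nat \<Rightarrow> nat \<Rightarrow> ((nat \<Rightarrow> nat) list \<Rightarrow> 'k::comm_ring_1)
    \<Rightarrow> ((nat \<Rightarrow> nat) list \<Rightarrow> 'k) \<Rightarrow> ((nat \<Rightarrow> nat) list \<Rightarrow> 'k)" where
  "starA r d e x y = (\<lambda>ms. \<Sum>(us, vs) \<in> {(us, vs). us \<in> basisA r d (length ms) \<and>
        vs \<in> basisA r e (length ms) \<and> map2 (\<lambda>u v i. u i + v i) us vs = ms}. x us * y vs)"

text \<open>Split of [p+q] (0-based: {0..<p+q}) given by the p-element set I; the shuffle of
  lists places us at the positions of I (in order) and vs at the complementary positions.\<close>

definition shuffle_list :: "nat set \<Rightarrow> 'a list \<Rightarrow> 'a list \<Rightarrow> 'a list" where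
  "shuffle_list I us vs =
     map (\<lambda>i. if i \<in> I then us ! card {j\<in>I. j < i} else vs ! card {j. j < i \<and> j \<notin> I})
       [0..<length us + length vs]"

definition shuffleA :: "nat \<Rightarrow> nat \<Rightarrow> nat \<Rightarrow> nat \<Rightarrow> nat set
    \<Rightarrow> ((nat \<Rightarrow> nat) list \<Rightarrow> 'k::comm_ring_1) \<Rightarrow> ((nat \<Rightarrow> nat) list \<Rightarrow> 'k)
    \<Rightarrow> ((nat \<Rightarrow> nat) list \<Rightarrow> 'k)" where
  "shuffleA r d p q I x y = (\<lambda>w. \<Sum>(us, vs) \<in> {(us, vs). us \<in> basisA r d p \<and>
        vs \<in> basisA r d q \<and> shuffle_list I us vs = w}. x us * y vs)"

end

theory Submission
  imports Defs "HOL-Library.FuncSet"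
begin

text \<open>Expanding a in the monomial basis reduces the claim to a = delta p for a basis tuple p of
  length n + m. Every tuple of that length is the shuffle of its restrictions p|I and p|I' to the
  positions in I and to the complementary positions I', and * acts position by position; hence
  delta p * (b \<cdot>_I f) = (delta (p|I) * b) \<cdot>_I (delta (p|I') * f). So one may take
  g_p = delta (p|I') and h_p = a(p) (delta (p|I) * b), with p running through the finite basis.\<close>

lemma finite_monomials_deg: "finite (monomials_deg r d)"
proof -
  have "(\<lambda>\<alpha>. restrict \<alpha> {..<r}) ` monomials_deg r d \<subseteq> PiE {..<r} (\<lambda>_. {0..d})"
  proof (intro image_subsetI PiE_I)
    fix \<alpha> i assume \<alpha>: "\<alpha> \<in> monomials_deg r d" and i: "i \<in> {..<r}"
    then have "\<alpha> i \<le> (\<Sum>j<r. \<alpha> j)" by (intro member_le_sum) auto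
    with \<alpha> i show "restrict \<alpha> {..<r} i \<in> {0..d}" by (simp add: monomials_deg_def)
  qed auto
  moreover have "inj_on (\<lambda>\<alpha>. restrict \<alpha> {..<r}) (monomials_deg r d)"
  proof (rule inj_onI, rule ext)
    fix \<alpha> \<beta> i assume "\<alpha> \<in> monomials_deg r d" "\<beta> \<in> monomials_deg r d"
      and "restrict \<alpha> {..<r} = restrict \<beta> {..<r}"
    then show "\<alpha> i = \<beta> i"
      by (cases "i < r") (auto simp: monomials_deg_def dest: fun_cong[of _ _ i])
  qed
  ultimately show ?thesis
    by (meson finite_PiE finite_atLeastAtMost finite_imageD finite_lessThan finite_subset)
qed

lemma finite_basisA: "finite (basisA r d n)"
  using finite_lists_length_eq[OF finite_monomials_deg, of r d n]
  unfolding basisA_def by (simp add: conj_commute)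

lemma length_basisA: "ms \<in> basisA r d n \<Longrightarrow> length ms = n"
  by (simp add: basisA_def)

lemma add_monomials_in_basisA:
  assumes "us \<in> basisA r e k" "vs \<in> basisA r d k"
  shows "map2 (\<lambda>u v i. u i + v i) us vs \<in> basisA r (e + d) k"
proof -
  have "(\<lambda>i. (us ! j) i + (vs ! j) i) \<in> monomials_deg r (e + d)" if "j < k" for j
  proof -
    have "us ! j \<in> monomials_deg r e" "vs ! j \<in> monomials_deg r d"
      using assms that by (auto simp: basisA_def intro!: subsetD[OF _ nth_mem])
    then show ?thesis by (simp add: monomials_deg_def sum.distrib)
  qed
  with assms show ?thesis by (auto simp: basisA_def in_set_conv_nth)
qed

definition delta :: "(nat \<Rightarrow> nat) list \<Rightarrow> (nat \<Rightarrow> nat) list \<Rightarrow> 'k::comm_ring_1" where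
  "delta p = (\<lambda>u. if u = p then 1 else 0)"

lemma delta_in_Aspace: "p \<in> basisA r d n \<Longrightarrow> delta p \<in> Aspace r d n"
  by (simp add: Aspace_def delta_def)

lemma Aspace_eq_sum_delta:
  assumes "x \<in> Aspace r d n"
  shows "x = (\<lambda>u. \<Sum>p\<in>basisA r d n. x p * delta p u)"
proof
  fix u
  have "(\<Sum>p\<in>basisA r d n. x p * delta p u) = (\<Sum>p\<in>basisA r d n. if p = u then x u else 0)"
    by (rule sum.cong) (auto simp: delta_def)
  then show "x u = (\<Sum>p\<in>basisA r d n. x p * delta p u)"
    using assms finite_basisA[of r d n] by (auto simp: Aspace_def)
qed

lemma starA_in_Aspace:
  assumes x: "x \<in> Aspace r e k"
  shows "starA r e d x y \<in> Aspace r (e + d) k"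
  unfolding Aspace_def
proof (intro CollectI allI impI)
  fix w assume w: "w \<notin> basisA r (e + d) k"
  show "starA r e d x y w = 0" unfolding starA_def
  proof (intro sum.neutral ballI)
    fix z assume "z \<in> {(us, vs). us \<in> basisA r e (length w) \<and> vs \<in> basisA r d (length w) \<and>
        map2 (\<lambda>u v i. u i + v i) us vs = w}"
    then obtain us vs where z: "z = (us, vs)" "us \<in> basisA r e (length w)"
      "vs \<in> basisA r d (length w)" "map2 (\<lambda>u v i. u i + v i) us vs = w" by blast
    have "x us = 0"
    proof (rule ccontr)
      assume "x us \<noteq> 0"
      then have "us \<in> basisA r e k" using x by (auto simp: Aspace_def)
      then have "length w = k" using z(2) by (metis length_basisA)
      then show False using add_monomials_in_basisA[OF z(2,3)] z(4) w by simp
    qed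
    then show "(case z of (us, vs) \<Rightarrow> x us * y vs) = 0" using z(1) by simp
  qed
qed

lemma starA_delta:
  "starA r e d (delta u) y v = (if u \<in> basisA r e (length v)
     then (\<Sum>vs | vs \<in> basisA r d (length v) \<and> map2 (\<lambda>u v i. u i + v i) u vs = v. y vs)
     else 0)"
proof -
  let ?S = "{(us, vs). us \<in> basisA r e (length v) \<and> vs \<in> basisA r d (length v) \<and>
        map2 (\<lambda>u v i. u i + v i) us vs = v}"
  have "finite ?S"
    by (rule finite_subset[of _ "basisA r e (length v) \<times> basisA r d (length v)"])
      (auto simp: finite_basisA)
  have "starA r e d (delta u) y v = (\<Sum>z\<in>?S. if fst z = u then y (snd z) else 0)"
    unfolding starA_def delta_def by (rule sum.cong) auto
  also have "\<dots> = (\<Sum>z | z \<in> ?S \<and> fst z = u. y (snd z))"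
    using \<open>finite ?S\<close> by (rule sum.inter_filter[symmetric])
  also have "{z. z \<in> ?S \<and> fst z = u} = (if u \<in> basisA r e (length v)
      then Pair u ` {vs. vs \<in> basisA r d (length v) \<and> map2 (\<lambda>u v i. u i + v i) u vs = v}
      else {})"
    by auto
  finally show ?thesis by (simp add: sum.reindex inj_on_def)
qed

lemma starA_linear_left:
  assumes "finite P"
  shows "starA r e d (\<lambda>u. \<Sum>p\<in>P. c p * x p u) y w = (\<Sum>p\<in>P. c p * starA r e d (x p) y w)"
  unfolding starA_def
  by (simp add: split_def sum_distrib_left sum_distrib_right mult.assoc sum.swap[of _ P])

lemma shuffleA_scale_left:
  "shuffleA r d p q I (\<lambda>u. c * x u) y w = c * shuffleA r d p q I x y w"
  by (simp add: shuffleA_def split_def sum_distrib_left mult.assoc)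

definition select_positions :: "nat set \<Rightarrow> 'a list \<Rightarrow> 'a list" where
  "select_positions S w = map ((!) w) (sorted_list_of_set S)"

lemma length_select_positions [simp]: "length (select_positions S w) = card S"
  by (simp add: select_positions_def)

lemma nth_select_positions:
  "k < card S \<Longrightarrow> select_positions S w ! k = w ! (sorted_list_of_set S ! k)"
  by (simp add: select_positions_def)

lemma sorted_list_of_set_nth_in:
  "k < card S \<Longrightarrow> sorted_list_of_set S ! k \<in> S"
  by (metis card.infinite length_sorted_list_of_set not_less_zero nth_mem set_sorted_list_of_set)

lemma set_select_positions_subset:
  "S \<subseteq> {..<length w} \<Longrightarrow> set (select_positions S w) \<subseteq> set w"
proof
  fix x assume S: "S \<subseteq> {..<length w}" and "x \<in> set (select_positions S w)"
  then obtain k where "k < card S" "x = w ! (sorted_list_of_set S ! k)"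
    by (auto simp: in_set_conv_nth nth_select_positions)
  with S show "x \<in> set w" by (auto dest!: sorted_list_of_set_nth_in)
qed

lemma select_positions_map2:
  assumes "S \<subseteq> {..<length p}" "length q = length p"
  shows "select_positions S (map2 g p q) = map2 g (select_positions S p) (select_positions S q)"
  using assms
  by (intro nth_equalityI) (auto simp: nth_select_positions dest!: sorted_list_of_set_nth_in)

lemma card_less_sorted_list_of_set_nth:
  fixes S :: "nat set"
  assumes "k < card S"
  shows "card {j\<in>S. j < sorted_list_of_set S ! k} = k"
proof -
  let ?L = "sorted_list_of_set S"
  have fin: "finite S" using assms card.infinite by fastforce
  have "{j\<in>S. j < ?L ! k} = (!) ?L ` {..<k}"
  proof (intro equalityI subsetI)
    fix j assume j: "j \<in> {j\<in>S. j < ?L ! k}"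
    then obtain i where i: "i < card S" "?L ! i = j"
      using fin by (metis in_set_conv_nth length_sorted_list_of_set mem_Collect_eq
          set_sorted_list_of_set)
    have "i < k"
      using i j assms sorted_nth_mono[OF sorted_sorted_list_of_set, of k i] by fastforce
    with i show "j \<in> (!) ?L ` {..<k}" by auto
  next
    fix j assume "j \<in> (!) ?L ` {..<k}"
    then obtain i where "i < k" "j = ?L ! i" by auto
    with assms show "j \<in> {j\<in>S. j < ?L ! k}"
      using strict_sorted_list_of_set[of S]
      by (auto simp: sorted_wrt_nth_less intro: sorted_list_of_set_nth_in)
  qed
  moreover have "inj_on ((!) ?L) {..<k}"
    using assms by (auto simp: inj_on_def nth_eq_iff_index_eq)
  ultimately show ?thesis by (simp add: card_image)
qed

context
  fixes I :: "nat set" and m n :: nat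
  assumes I_subset: "I \<subseteq> {0..<n + m}" and card_I: "card I = m"
begin

lemma card_complement: "card ({0..<n + m} - I) = n"
  using I_subset card_I by (simp add: card_Diff_subset finite_subset)

lemma length_shuffle_list: "length (shuffle_list I us vs) = length us + length vs"
  by (simp add: shuffle_list_def)

lemma nth_shuffle_list:
  assumes "length us = m" "length vs = n" "i < n + m"
  shows "shuffle_list I us vs ! i =
    (if i \<in> I then us ! card {j\<in>I. j < i} else vs ! card {j. j < i \<and> j \<notin> I})"
  using assms by (simp add: shuffle_list_def)

lemma nth_shuffle_list_I:
  assumes "length us = m" "length vs = n" "k < m"
  shows "shuffle_list I us vs ! (sorted_list_of_set I ! k) = us ! k"
proof -
  have "sorted_list_of_set I ! k \<in> I" using assms card_I by (simp add: sorted_list_of_set_nth_in)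
  then show ?thesis
    using assms I_subset card_I card_less_sorted_list_of_set_nth[of k I]
    by (subst nth_shuffle_list) auto
qed

lemma nth_shuffle_list_complement:
  assumes "length us = m" "length vs = n" "k < n"
  shows "shuffle_list I us vs ! (sorted_list_of_set ({0..<n + m} - I) ! k) = vs ! k"
proof -
  let ?C = "{0..<n + m} - I"
  let ?i = "sorted_list_of_set ?C ! k"
  have i: "?i \<in> ?C" using assms card_complement sorted_list_of_set_nth_in[of k ?C] by simp
  then have "{j. j < ?i \<and> j \<notin> I} = {j\<in>?C. j < ?i}" by auto
  then have "card {j. j < ?i \<and> j \<notin> I} = k"
    using assms card_complement card_less_sorted_list_of_set_nth[of k ?C] by simp
  with i assms show ?thesis by (subst nth_shuffle_list) auto
qed

lemma select_shuffle_list: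
  assumes "length us = m" "length vs = n"
  shows "select_positions I (shuffle_list I us vs) = us"
    and "select_positions ({0..<n + m} - I) (shuffle_list I us vs) = vs"
  using assms card_I card_complement nth_shuffle_list_I[OF assms] nth_shuffle_list_complement[OF assms]
  by (auto intro!: nth_equalityI simp: nth_select_positions)

lemma positions_cases:
  assumes "i < n + m"
  obtains k where "k < m" "i = sorted_list_of_set I ! k"
  | k where "k < n" "i = sorted_list_of_set ({0..<n + m} - I) ! k"
proof (cases "i \<in> I")
  case True
  then have "i \<in> set (sorted_list_of_set I)" using finite_subset[OF I_subset] by simp
  then show ?thesis using that(1) card_I by (metis in_set_conv_nth length_sorted_list_of_set)
next
  case False
  then have "i \<in> set (sorted_list_of_set ({0..<n + m} - I))" using assms by simp
  then show ?thesis using that(2) card_complement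
    by (metis in_set_conv_nth length_sorted_list_of_set)
qed

lemma shuffle_list_select:
  assumes "length w = n + m"
  shows "shuffle_list I (select_positions I w) (select_positions ({0..<n + m} - I) w) = w"
proof (rule nth_equalityI)
  fix i assume "i < length (shuffle_list I (select_positions I w)
                               (select_positions ({0..<n + m} - I) w))"
  then have "i < n + m" by (simp add: length_shuffle_list card_I card_complement)
  then show "shuffle_list I (select_positions I w) (select_positions ({0..<n + m} - I) w) ! i
             = w ! i"
    by (cases rule: positions_cases)
      (simp_all add: nth_shuffle_list_I nth_shuffle_list_complement nth_select_positions
        card_I card_complement)
qed (simp add: length_shuffle_list card_I card_complement assms)

lemma map2_eq_iff_select_positions:
  assumes "length p = n + m" "length q = n + m" "length w = n + m"
  shows "map2 g p q = w \<longleftrightarrow>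
      map2 g (select_positions I p) (select_positions I q) = select_positions I w \<and>
      map2 g (select_positions ({0..<n + m} - I) p) (select_positions ({0..<n + m} - I) q)
        = select_positions ({0..<n + m} - I) w"
proof -
  have "I \<subseteq> {..<length p}" "{0..<n + m} - I \<subseteq> {..<length p}"
    using I_subset assms by auto
  then show ?thesis
    using assms select_positions_map2[of _ p q g] shuffle_list_select[of w]
      shuffle_list_select[of "map2 g p q"]
    by (metis length_map map_fst_zip)
qed

lemma select_positions_in_basisA:
  assumes "w \<in> basisA r d (n + m)"
  shows "select_positions I w \<in> basisA r d m"
    and "select_positions ({0..<n + m} - I) w \<in> basisA r d n"
proof -
  have "length w = n + m" "set w \<subseteq> monomials_deg r d" using assms by (auto simp: basisA_def)
  moreover have "I \<subseteq> {..<n + m}" "{0..<n + m} - I \<subseteq> {..<n + m}" using I_subset by auto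
  ultimately show "select_positions I w \<in> basisA r d m"
    and "select_positions ({0..<n + m} - I) w \<in> basisA r d n"
    using set_select_positions_subset[of I w] set_select_positions_subset[of "{0..<n + m} - I" w]
    by (auto simp: basisA_def card_I card_complement)
qed

lemma shuffle_list_in_basisA:
  assumes us: "us \<in> basisA r d m" and vs: "vs \<in> basisA r d n"
  shows "shuffle_list I us vs \<in> basisA r d (n + m)"
proof -
  have len: "length us = m" "length vs = n" using us vs by (simp_all add: length_basisA)
  have "shuffle_list I us vs ! i \<in> monomials_deg r d" if "i < n + m" for i
    using that
  proof (cases rule: positions_cases)
    case (1 k)
    then show ?thesis using us len nth_shuffle_list_I[OF len] by (auto simp: basisA_def)
  next
    case (2 k)
    then show ?thesis using vs len nth_shuffle_list_complement[OF len] by (auto simp: basisA_def)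
  qed
  then show ?thesis using len by (auto simp: basisA_def in_set_conv_nth length_shuffle_list)
qed

text \<open>A basis tuple is the shuffle of exactly one pair, so the sum defining the shuffle product
  has at most one term.\<close>

lemma shuffleA_apply:
  "shuffleA r d m n I x y w = (if w \<in> basisA r d (n + m)
     then x (select_positions I w) * y (select_positions ({0..<n + m} - I) w) else 0)"
proof -
  have "{(us, vs). us \<in> basisA r d m \<and> vs \<in> basisA r d n \<and> shuffle_list I us vs = w}
     = (if w \<in> basisA r d (n + m)
        then {(select_positions I w, select_positions ({0..<n + m} - I) w)} else {})"
  proof (cases "w \<in> basisA r d (n + m)")
    case True
    then show ?thesis
      using select_shuffle_list[OF length_basisA length_basisA] shuffle_list_select[of w]
        select_positions_in_basisA[OF True] length_basisA[OF True]
      by auto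
  qed (use shuffle_list_in_basisA in auto)
  then show ?thesis by (simp add: shuffleA_def)
qed

lemma starA_delta_shuffleA:
  fixes b f :: "(nat \<Rightarrow> nat) list \<Rightarrow> 'k::comm_ring_1"
  assumes p: "p \<in> basisA r e (n + m)"
  shows "starA r e d (delta p) (shuffleA r d m n I b f) w =
    shuffleA r (d + e) m n I (starA r e d (delta (select_positions I p)) b)
      (starA r e d (delta (select_positions ({0..<n + m} - I) p)) f) w"
proof (cases "w \<in> basisA r (d + e) (n + m)")
  case False
  then have "starA r e d (delta p) (shuffleA r d m n I b f) w = 0"
    using starA_in_Aspace[OF delta_in_Aspace[OF p]] by (auto simp: Aspace_def add.commute)
  with False show ?thesis by (simp add: shuffleA_apply)
next
  case True
  let ?C = "{0..<n + m} - I"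
  let ?add = "map2 (\<lambda>u v i. u i + v i) :: (nat \<Rightarrow> nat) list \<Rightarrow> _"
  have lw: "length w = n + m" using True by (rule length_basisA)
  have lp: "length p = n + m" using p by (rule length_basisA)
  define Q where "Q = {q \<in> basisA r d (n + m). ?add p q = w}"
  define V where "V = {vs \<in> basisA r d m. ?add (select_positions I p) vs = select_positions I w}"
  define Y where "Y = {ys \<in> basisA r d n. ?add (select_positions ?C p) ys = select_positions ?C w}"
  have "starA r e d (delta p) (shuffleA r d m n I b f) w =
      (\<Sum>q\<in>Q. b (select_positions I q) * f (select_positions ?C q))"
    using p lw by (simp add: starA_delta Q_def shuffleA_apply)
  also have "\<dots> = (\<Sum>(vs, ys)\<in>V \<times> Y. b vs * f ys)"
  proof (rule sum.reindex_bij_witness[where i = "\<lambda>(vs, ys). shuffle_list I vs ys"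
        and j = "\<lambda>q. (select_positions I q, select_positions ?C q)"])
    fix q assume "q \<in> Q"
    then have q: "q \<in> basisA r d (n + m)" "?add p q = w" by (auto simp: Q_def)
    show "(\<lambda>(vs, ys). shuffle_list I vs ys) (select_positions I q, select_positions ?C q) = q"
      using shuffle_list_select[OF length_basisA[OF q(1)]] by simp
    show "(select_positions I q, select_positions ?C q) \<in> V \<times> Y"
      using q select_positions_in_basisA[OF q(1)]
        map2_eq_iff_select_positions[OF lp length_basisA[OF q(1)] lw]
      by (simp add: V_def Y_def)
  next
    fix z assume "z \<in> V \<times> Y"
    then obtain vs ys where z: "z = (vs, ys)" "vs \<in> basisA r d m" "ys \<in> basisA r d n"
      "?add (select_positions I p) vs = select_positions I w"
      "?add (select_positions ?C p) ys = select_positions ?C w"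
      by (auto simp: V_def Y_def)
    have sel: "select_positions I (shuffle_list I vs ys) = vs"
      "select_positions ?C (shuffle_list I vs ys) = ys"
      using select_shuffle_list[OF length_basisA[OF z(2)] length_basisA[OF z(3)]] by simp_all
    have sh: "shuffle_list I vs ys \<in> basisA r d (n + m)"
      using shuffle_list_in_basisA[OF z(2,3)] .
    show "(select_positions I ((\<lambda>(vs, ys). shuffle_list I vs ys) z),
        select_positions ?C ((\<lambda>(vs, ys). shuffle_list I vs ys) z)) = z"
      using z(1) sel by simp
    show "(\<lambda>(vs, ys). shuffle_list I vs ys) z \<in> Q"
      using z sel sh map2_eq_iff_select_positions[OF lp length_basisA[OF sh] lw]
      by (simp add: Q_def)
  qed (auto simp: split_def)
  also have "\<dots> = (\<Sum>vs\<in>V. b vs) * (\<Sum>ys\<in>Y. f ys)"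
    by (simp add: sum_product sum.cartesian_product split_def)
  also have "\<dots> = shuffleA r (d + e) m n I (starA r e d (delta (select_positions I p)) b)
      (starA r e d (delta (select_positions ?C p)) f) w"
    using True select_positions_in_basisA[OF p]
    by (simp add: shuffleA_apply starA_delta V_def Y_def card_I card_complement)
  finally show ?thesis .
qed

end

theorem lemma2p1:
  fixes r d e n m :: nat and I :: "nat set"
    and f b a :: "(nat \<Rightarrow> nat) list \<Rightarrow> 'k::comm_ring_1"
  assumes "noetherian_cring TYPE('k)"
    and "r > 0"
    and "f \<in> Aspace r d n" and "b \<in> Aspace r d m" and "a \<in> Aspace r e (n + m)"
    and "I \<subseteq> {0..<n + m}" and "card I = m"
  shows "\<exists>(s::nat) (g :: nat \<Rightarrow> (nat \<Rightarrow> nat) list \<Rightarrow> 'k) h.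
           (\<forall>i<s. g i \<in> Aspace r e n \<and> h i \<in> Aspace r (d + e) m) \<and>
           (\<forall>w. starA r e d a (shuffleA r d m n I b f) w =
                (\<Sum>i<s. shuffleA r (d + e) m n I (h i) (starA r e d (g i) f) w))"
proof -
  let ?P = "basisA r e (n + m)"
  let ?C = "{0..<n + m} - I"
  obtain p where p: "bij_betw p {..<card ?P} ?P"
    using ex_bij_betw_nat_finite[OF finite_basisA[of r e "n + m"]] by (auto simp: atLeast0LessThan)
  define g :: "nat \<Rightarrow> (nat \<Rightarrow> nat) list \<Rightarrow> 'k" where "g i = delta (select_positions ?C (p i))" for i
  define h where "h i = (\<lambda>u. a (p i) * starA r e d (delta (select_positions I (p i))) b u)" for i
  have "g i \<in> Aspace r e n \<and> h i \<in> Aspace r (d + e) m" if "i < card ?P" for i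
  proof -
    have "p i \<in> ?P" using p that by (auto dest: bij_betwE)
    then have "select_positions I (p i) \<in> basisA r e m" "select_positions ?C (p i) \<in> basisA r e n"
      using select_positions_in_basisA[OF assms(6,7)] by auto
    then show ?thesis
      using starA_in_Aspace[OF delta_in_Aspace, of "select_positions I (p i)" r e m d b]
      by (simp add: g_def delta_in_Aspace) (auto simp: h_def Aspace_def add.commute)
  qed
  moreover have "starA r e d a (shuffleA r d m n I b f) w =
      (\<Sum>i<card ?P. shuffleA r (d + e) m n I (h i) (starA r e d (g i) f) w)" for w
  proof -
    have "starA r e d a (shuffleA r d m n I b f) w =
        (\<Sum>q\<in>?P. a q * starA r e d (delta q) (shuffleA r d m n I b f) w)"
      by (subst Aspace_eq_sum_delta[OF assms(5)]) (simp add: starA_linear_left finite_basisA)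
    also have "\<dots> = (\<Sum>q\<in>?P. shuffleA r (d + e) m n I
        (\<lambda>u. a q * starA r e d (delta (select_positions I q)) b u)
        (starA r e d (delta (select_positions ?C q)) f) w)"
      by (simp add: starA_delta_shuffleA[OF assms(6,7)] shuffleA_scale_left)
    also have "\<dots> = (\<Sum>i<card ?P. shuffleA r (d + e) m n I (h i) (starA r e d (g i) f) w)"
      by (simp add: sum.reindex_bij_betw[OF p, symmetric] g_def h_def)
    finally show ?thesis .
  qed
  ultimately show ?thesis by blast
qed

end
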